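(* Let $(K,\delta_K^* )$ be an iterative $q$-difference field whose field of constants is $C$. Then for any elements $x_1,\dots,x_r\in K$ which are linearly independent over $C$, the iterative Taylor series $\mathbf T_{x_1},\dots,\mathbf T_{x_r}$ are linearly independent over $K$; that is, if $a_1,\dots,a_r\in K$ satisfy $\sum_{j=1}^ra_j\delta_K^{(k)}(x_j)=0$ for all $k\in\mathbb N$, then $a_1=\dots=a_r=0$.
   Context: Let $C$ be an algebraically closed field and $q\in C$ with $q\ne1$ (possibly a root of unity). Let $F=C(t)$ with the automorphism $\sigma_q(f(t))=f(qt)$. For $r,k\in\mathbb N$, $\binom{r}{k}_q$ is the value at $q$ of the Gaussian polynomial $\prod_{i=1}^{k}\frac{1-x^{r-i+1}}{1-x^{i}}\in\mathbb Z[x]$. An iterative $q$-difference field is a field $K\supseteq F$ with an automorphism $\sigma_q$ extending that of $F$ and maps $\delta_K^{(k)}:K\to K$ ($k\in\mathbb N$) such that for all $a,b\in K$, $i,j,k$: $\delta_K^{(0)}=\mathrm{id}$; $\delta_K^{(1)}=\frac{\sigma_q-\mathrm{id}}{(q-1)t}$; $\delta_K^{(k)}$ additive; $\delta_K^{(k)}(ab)=\sum_{i+j=k}\sigma_q^i(\delta_K^{(j)}(a))\delta_K^{(i)}(b)$; $\delta_K^{(i)}\circ\delta_K^{(j)}=\binom{i+j}{i}_q\delta_K^{(i+j)}$. Its field of constants is $\{c\in K:\delta_K^{(k)}(c)=0\ \forall k\ge1\}$. The iterative Taylor series of $a\in K$ is $\mathbf T_a=\sum_{k\in\mathbb N}\delta_K^{(k)}(a)T^k\in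 K[[T]]$. *)

theory Defs
  imports "HOL-Computational_Algebra.Polynomial"
begin

text \<open>Gaussian polynomial prod_{i=1}^k (1 - x^(r-i+1)) / (1 - x^i) in Z[x]
  (exact polynomial division), and its value at q.\<close>
definition gauss_poly :: "nat \<Rightarrow> nat \<Rightarrow> int poly" where
  "gauss_poly r k =
     (\<Prod>i\<in>{1..k}. 1 - monom 1 (r + 1 - i)) div (\<Prod>i\<in>{1..k}. 1 - monom 1 i)"

definition qbinom :: "'a::field \<Rightarrow> nat \<Rightarrow> nat \<Rightarrow> 'a" where
  "qbinom q r k = poly (map_poly of_int (gauss_poly r k)) q"

definition is_subfield :: "'a::field set \<Rightarrow> bool" where
  "is_subfield C \<longleftrightarrow> 0 \<in> C \<and> 1 \<in> C \<and>
     (\<forall>a\<in>C. \<forall>b\<in>C. a + b \<in> C \<and> a * b \<in> C) \<and>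
     (\<forall>a\<in>C. - a \<in> C \<and> inverse a \<in> C)"

definition alg_closed_subfield :: "'a::field set \<Rightarrow> bool" where
  "alg_closed_subfield C \<longleftrightarrow>
     (\<forall>p. (\<forall>i. coeff p i \<in> C) \<and> degree p > 0 \<longrightarrow> (\<exists>x\<in>C. poly p x = 0))"

text \<open>t is transcendental over C (so C(t) inside K is the rational function field).\<close>
definition transcendental_over :: "'a::field set \<Rightarrow> 'a \<Rightarrow> bool" where
  "transcendental_over C t \<longleftrightarrow>
     (\<forall>p. (\<forall>i. coeff p i \<in> C) \<and> poly p t = 0 \<longrightarrow> p = 0)"

text \<open>Iterative q-difference field structure on the field (type 'a) containing
  F = C(t), with automorphism sigma extending sigma_q and iterative maps delta.\<close>
definition iter_q_diff_field ::
  "'a::field set \<Rightarrow> 'a \<Rightarrow> 'a \<Rightarrow> ('a \<Rightarrow> 'a) \<Rightarrow> (nat \<Rightarrow> 'a \<Rightarrow> 'a) \<Rightarrow> bool" where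
  "iter_q_diff_field C q t \<sigma> \<delta> \<longleftrightarrow>
     is_subfield C \<and> alg_closed_subfield C \<and> q \<in> C \<and> q \<noteq> 1 \<and>
     transcendental_over C t \<and>
     bij \<sigma> \<and> (\<forall>a b. \<sigma> (a + b) = \<sigma> a + \<sigma> b) \<and> (\<forall>a b. \<sigma> (a * b) = \<sigma> a * \<sigma> b) \<and>
     \<sigma> 1 = 1 \<and> (\<forall>c\<in>C. \<sigma> c = c) \<and> \<sigma> t = q * t \<and>
     (\<forall>a. \<delta> 0 a = a) \<and>
     (\<forall>a. \<delta> 1 a = (\<sigma> a - a) / ((q - 1) * t)) \<and>
     (\<forall>k a b. \<delta> k (a + b) = \<delta> k a + \<delta> k b) \<and>
     (\<forall>k a b. \<delta> k (a * b) = (\<Sum>i\<le>k. (\<sigma> ^^ i) (\<delta> (k - i) a) * \<delta> i b)) \<and>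
     (\<forall>i j a. \<delta> i (\<delta> j a) = qbinom q (i + j) i * \<delta> (i + j) a)"

definition qconstants :: "(nat \<Rightarrow> 'a::field \<Rightarrow> 'a) \<Rightarrow> 'a set" where
  "qconstants \<delta> = {c. \<forall>k\<ge>1. \<delta> k c = 0}"

end

theory Submission
  imports Defs
begin

text \<open>Take a nonzero relation \<Sum>_j a_j \<delta>_k(x_j) = 0 (for all k) of minimal support, normalised
  so that a_j0 = 1. If \<delta>_i kills every a_j for 0 < i < l, applying \<delta>_l to the relation at
  level m, with the Leibniz rule and the iteration rule \<delta>_l \<delta>_m = \<beta> \<delta>_(l+m), leaves
  \<Sum>_j \<sigma>^l(\<delta>_m x_j) \<delta>_l(a_j) = 0. Pulling back along \<sigma>^l gives a relation whose coefficient
  at j0 is \<delta>_l(1) = 0, so it vanishes by minimality. By induction on l all a_j are constants,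
  contradicting the independence of the x_j over the constants.\<close>

lemma additive_zero:
  fixes f :: "'a::ab_group_add \<Rightarrow> 'b::ab_group_add"
  assumes "\<And>a b. f (a + b) = f a + f b"
  shows "f 0 = 0"
  using assms[of 0 0] by simp

lemma additive_sum:
  fixes f :: "'a::ab_group_add \<Rightarrow> 'b::ab_group_add"
  assumes "\<And>a b. f (a + b) = f a + f b"
  shows "f (\<Sum>j\<in>A. g j) = (\<Sum>j\<in>A. f (g j))"
  by (induction A rule: infinite_finite_induct) (simp_all add: additive_zero assms)

text \<open>The q-binomial coefficient of the iteration rule plays no role; it becomes an arbitrary \<open>\<beta>\<close>.\<close>

locale iterative_difference =
  fixes \<sigma> :: "'a::field \<Rightarrow> 'a" and \<delta> :: "nat \<Rightarrow> 'a \<Rightarrow> 'a" and \<beta> :: "nat \<Rightarrow> nat \<Rightarrow> 'a"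
  assumes bij_\<sigma>: "bij \<sigma>"
    and \<sigma>_add: "\<sigma> (a + b) = \<sigma> a + \<sigma> b"
    and \<sigma>_mult: "\<sigma> (a * b) = \<sigma> a * \<sigma> b"
    and \<delta>_0: "\<delta> 0 a = a"
    and \<delta>_add: "\<delta> k (a + b) = \<delta> k a + \<delta> k b"
    and \<delta>_mult: "\<delta> k (a * b) = (\<Sum>i\<le>k. (\<sigma> ^^ i) (\<delta> (k - i) a) * \<delta> i b)"
    and \<delta>_\<delta>: "\<delta> i (\<delta> j a) = \<beta> i j * \<delta> (i + j) a"
begin

lemma bij_\<sigma>_pow: "bij (\<sigma> ^^ l)"
  using bij_\<sigma> by simp

lemma \<sigma>_pow_add: "(\<sigma> ^^ l) (a + b) = (\<sigma> ^^ l) a + (\<sigma> ^^ l) b"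
  by (induction l) (simp_all add: \<sigma>_add)

lemma \<sigma>_pow_mult: "(\<sigma> ^^ l) (a * b) = (\<sigma> ^^ l) a * (\<sigma> ^^ l) b"
  by (induction l) (simp_all add: \<sigma>_mult)

lemma \<sigma>_pow_zero: "(\<sigma> ^^ l) 0 = 0"
  by (rule additive_zero) (rule \<sigma>_pow_add)

lemma \<sigma>_pow_sum: "(\<sigma> ^^ l) (\<Sum>j\<in>A. g j) = (\<Sum>j\<in>A. (\<sigma> ^^ l) (g j))"
  by (rule additive_sum) (rule \<sigma>_pow_add)

lemma \<sigma>_one: "\<sigma> 1 = 1"
proof -
  obtain u where "\<sigma> u = 1"
    using surjD[OF bij_is_surj[OF bij_\<sigma>], of 1] by auto
  then have "\<sigma> 1 = \<sigma> 1 * \<sigma> u" by simp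
  also have "\<dots> = \<sigma> (1 * u)" by (rule \<sigma>_mult[symmetric])
  also have "\<dots> = 1" using \<open>\<sigma> u = 1\<close> by simp
  finally show ?thesis .
qed

lemma \<sigma>_pow_one: "(\<sigma> ^^ l) 1 = 1"
  by (induction l) (simp_all add: \<sigma>_one)

lemma inv_\<sigma>_pow_eq_0_iff: "inv (\<sigma> ^^ l) y = 0 \<longleftrightarrow> y = 0"
proof -
  have "0 = inv (\<sigma> ^^ l) y \<longleftrightarrow> (\<sigma> ^^ l) 0 = y"
    by (rule bij_inv_eq_iff[OF bij_\<sigma>_pow])
  then show ?thesis by (auto simp: \<sigma>_pow_zero)
qed

lemma \<delta>_zero: "\<delta> k 0 = 0"
  by (rule additive_zero) (rule \<delta>_add)

lemma \<delta>_sum: "\<delta> k (\<Sum>j\<in>A. g j) = (\<Sum>j\<in>A. \<delta> k (g j))"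
  by (rule additive_sum) (rule \<delta>_add)

lemma \<delta>_mult_if_lower_vanish:
  assumes "0 < l" and "\<And>i. 0 < i \<Longrightarrow> i < l \<Longrightarrow> \<delta> i b = 0"
  shows "\<delta> l (a * b) = \<delta> l a * b + (\<sigma> ^^ l) a * \<delta> l b"
proof -
  obtain l' where l': "l = Suc l'" using assms(1) by (cases l) auto
  define f where "f i = (\<sigma> ^^ i) (\<delta> (l - i) a) * \<delta> i b" for i
  have "\<delta> l (a * b) = (\<Sum>i\<le>l. f i)"
    unfolding f_def by (rule \<delta>_mult)
  also have "\<dots> = f 0 + (\<Sum>i<l'. f (Suc i)) + f l"
    unfolding l' by (simp add: sum.atMost_Suc_shift del: sum.atMost_Suc)
      (simp add: lessThan_Suc_atMost[symmetric])
  also have "(\<Sum>i<l'. f (Suc i)) = 0"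
    using assms(2) l' unfolding f_def by (intro sum.neutral) auto
  finally show ?thesis
    unfolding f_def by (simp add: \<delta>_0)
qed

lemma \<delta>_one: "0 < l \<Longrightarrow> \<delta> l 1 = 0"
proof (induction l rule: less_induct)
  case (less l)
  then have "\<delta> l 1 = \<delta> l 1 + \<delta> l 1"
    using \<delta>_mult_if_lower_vanish[of l 1 1] by (simp add: \<sigma>_pow_one)
  then show ?case by (simp only: add_cancel_right_right)
qed

definition taylor_relation :: "nat set \<Rightarrow> (nat \<Rightarrow> 'a) \<Rightarrow> (nat \<Rightarrow> 'a) \<Rightarrow> bool" where
  "taylor_relation J x a \<longleftrightarrow> (\<forall>k. (\<Sum>j\<in>J. a j * \<delta> k (x j)) = 0)"

lemma taylor_relation_scale:
  "taylor_relation J x a \<Longrightarrow> taylor_relation J x (\<lambda>j. c * a j)"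
  unfolding taylor_relation_def by (simp add: mult.assoc sum_distrib_left[symmetric])

lemma taylor_relation_derivative:
  assumes rel: "taylor_relation J x a" and "0 < l"
    and lower: "\<And>i j. 0 < i \<Longrightarrow> i < l \<Longrightarrow> j \<in> J \<Longrightarrow> \<delta> i (a j) = 0"
  shows "taylor_relation J x (\<lambda>j. inv (\<sigma> ^^ l) (\<delta> l (a j)))"
  unfolding taylor_relation_def
proof
  fix m
  have "\<delta> l (\<delta> m (x j) * a j)
      = \<beta> l m * (a j * \<delta> (l + m) (x j)) + (\<sigma> ^^ l) (\<delta> m (x j)) * \<delta> l (a j)"
    if "j \<in> J" for j
    using \<delta>_mult_if_lower_vanish[OF \<open>0 < l\<close> lower[OF _ _ that]] by (simp add: \<delta>_\<delta>)
  then have "(\<Sum>j\<in>J. \<delta> l (\<delta> m (x j) * a j))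
      = \<beta> l m * (\<Sum>j\<in>J. a j * \<delta> (l + m) (x j))
        + (\<Sum>j\<in>J. (\<sigma> ^^ l) (\<delta> m (x j)) * \<delta> l (a j))"
    by (simp add: sum.distrib sum_distrib_left)
  moreover have "(\<Sum>j\<in>J. \<delta> l (\<delta> m (x j) * a j)) = 0"
    using rel unfolding taylor_relation_def
    by (simp add: \<delta>_sum[symmetric] mult.commute \<delta>_zero)
  ultimately have "(\<Sum>j\<in>J. (\<sigma> ^^ l) (\<delta> m (x j)) * \<delta> l (a j)) = 0"
    using rel unfolding taylor_relation_def by simp
  define b where "b j = inv (\<sigma> ^^ l) (\<delta> l (a j))" for j
  have "(\<sigma> ^^ l) (\<Sum>j\<in>J. b j * \<delta> m (x j))
      = (\<Sum>j\<in>J. (\<sigma> ^^ l) (b j) * (\<sigma> ^^ l) (\<delta> m (x j)))"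
    by (simp add: \<sigma>_pow_sum \<sigma>_pow_mult)
  also have "\<dots> = (\<Sum>j\<in>J. (\<sigma> ^^ l) (\<delta> m (x j)) * \<delta> l (a j))"
    by (simp add: b_def surj_f_inv_f[OF bij_is_surj[OF bij_\<sigma>_pow[of l]]] mult.commute)
  also have "\<dots> = (\<sigma> ^^ l) 0"
    using \<open>(\<Sum>j\<in>J. (\<sigma> ^^ l) (\<delta> m (x j)) * \<delta> l (a j)) = 0\<close> by (simp add: \<sigma>_pow_zero)
  finally show "(\<Sum>j\<in>J. b j * \<delta> m (x j)) = 0"
    by (rule injD[OF bij_is_inj[OF bij_\<sigma>_pow[of l]]])
qed

lemma minimal_taylor_relation_coeffs_constant:
  assumes rel: "taylor_relation J x a" and "j\<^sub>0 \<in> J" and "a j\<^sub>0 = 1"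
    and minimal: "\<And>b. taylor_relation J x b \<Longrightarrow> b j\<^sub>0 = 0
      \<Longrightarrow> (\<forall>j\<in>J. a j = 0 \<longrightarrow> b j = 0) \<Longrightarrow> \<forall>j\<in>J. b j = 0"
  shows "\<forall>j\<in>J. a j \<in> qconstants \<delta>"
proof -
  have "\<forall>j\<in>J. \<delta> l (a j) = 0" if "0 < l" for l
    using that
  proof (induction l rule: less_induct)
    case (less l)
    let ?b = "\<lambda>j. inv (\<sigma> ^^ l) (\<delta> l (a j))"
    have "\<forall>j\<in>J. ?b j = 0"
    proof (rule minimal)
      show "taylor_relation J x ?b"
        using less by (intro taylor_relation_derivative[OF rel]) auto
      show "?b j\<^sub>0 = 0"
        using \<open>a j\<^sub>0 = 1\<close> less.prems by (simp add: \<delta>_one inv_\<sigma>_pow_eq_0_iff)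
      show "\<forall>j\<in>J. a j = 0 \<longrightarrow> ?b j = 0"
        by (simp add: \<delta>_zero inv_\<sigma>_pow_eq_0_iff)
    qed
    then show ?case
      by (simp add: inv_\<sigma>_pow_eq_0_iff)
  qed
  then show ?thesis
    unfolding qconstants_def by auto
qed

theorem taylor_series_independent:
  assumes "finite J"
    and indep: "\<forall>c. (\<forall>j\<in>J. c j \<in> qconstants \<delta>) \<and> (\<Sum>j\<in>J. c j * x j) = 0
      \<longrightarrow> (\<forall>j\<in>J. c j = 0)"
    and "taylor_relation J x a"
  shows "\<forall>j\<in>J. a j = 0"
  using assms(3)
proof (induction "card {j\<in>J. a j \<noteq> 0}" arbitrary: a rule: less_induct)
  case less
  show ?case
  proof (rule ccontr)
    assume "\<not> (\<forall>j\<in>J. a j = 0)"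
    then obtain j\<^sub>0 where j\<^sub>0: "j\<^sub>0 \<in> J" "a j\<^sub>0 \<noteq> 0" by blast
    define a' where "a' j = a j / a j\<^sub>0" for j
    have rel': "taylor_relation J x a'"
      using taylor_relation_scale[OF less.prems, of "inverse (a j\<^sub>0)"]
      unfolding a'_def by (simp add: divide_inverse_commute)
    have "\<forall>j\<in>J. a' j \<in> qconstants \<delta>"
    proof (rule minimal_taylor_relation_coeffs_constant[OF rel' j\<^sub>0(1)])
      show "a' j\<^sub>0 = 1" using j\<^sub>0 unfolding a'_def by simp
      fix b assume b: "taylor_relation J x b" "b j\<^sub>0 = 0" "\<forall>j\<in>J. a' j = 0 \<longrightarrow> b j = 0"
      have "{j\<in>J. b j \<noteq> 0} \<subset> {j\<in>J. a j \<noteq> 0}"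
        using b j\<^sub>0 unfolding a'_def by auto
      then have "card {j\<in>J. b j \<noteq> 0} < card {j\<in>J. a j \<noteq> 0}"
        using \<open>finite J\<close> by (simp add: psubset_card_mono)
      then show "\<forall>j\<in>J. b j = 0" using b(1) by (rule less.hyps)
    qed
    moreover have "(\<Sum>j\<in>J. a' j * x j) = 0"
    proof -
      have "(\<Sum>j\<in>J. a' j * \<delta> 0 (x j)) = 0"
        using rel' unfolding taylor_relation_def by blast
      then show ?thesis by (simp add: \<delta>_0)
    qed
    ultimately have "\<forall>j\<in>J. a' j = 0" using indep by blast
    then show False using j\<^sub>0 unfolding a'_def by simp
  qed
qed

end

theorem theorem2p22:
  fixes C :: "'a::field set" and q t :: 'a and \<sigma> :: "'a \<Rightarrow> 'a"
    and \<delta> :: "nat \<Rightarrow> 'a \<Rightarrow> 'a" and r :: nat and x a :: "nat \<Rightarrow> 'a"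
  assumes "iter_q_diff_field C q t \<sigma> \<delta>"
    and "qconstants \<delta> = C"
    and "\<forall>c. (\<forall>j\<in>{1..r}. c j \<in> C) \<and> (\<Sum>j=1..r. c j * x j) = 0
             \<longrightarrow> (\<forall>j\<in>{1..r}. c j = 0)"
    and "\<forall>k. (\<Sum>j=1..r. a j * \<delta> k (x j)) = 0"
  shows "\<forall>j\<in>{1..r}. a j = 0"
proof -
  interpret iterative_difference \<sigma> \<delta> "\<lambda>i j. qbinom q (i + j) i"
    using assms(1) unfolding iter_q_diff_field_def by unfold_locales auto
  show ?thesis
    using taylor_series_independent[of "{1..r}" x a] assms(2-4)
    unfolding taylor_relation_def by simp
qed

end
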